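(* For natural numbers $n\le m$, $\dim(W_{n,m})\leq\binom{m}{n}\cdot\frac{(m-1)!}{(n-1)!}$.
   Context: $\mathbb{F}$ is a field of characteristic zero; $\mathbb{F}\langle X\rangle$ the free non-unitary associative algebra on $X=\{x_1,x_2,\dots\}$; $(x^n)^T$ the smallest ideal containing $x^n$ invariant under all algebra endomorphisms; $V_m$ the space of multilinear polynomials of degree $m$ in $x_1,\dots,x_m$; $W_{n,m}:=V_m\cap(x^n)^T$. *)

theory Defs
  imports Complex_Main "HOL-Library.Function_Algebras"
begin

text \<open>Free non-unitary associative algebra F<X> on X = {x_0, x_1, ...}
  (x_i is encoded by the natural number i, so the paper's x_1 is index 0).
  A polynomial is a finitely supported coefficient function on words
  (nat lists); the empty word has coefficient 0 (non-unitary).\<close>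

type_synonym 'a ncpoly = "nat list \<Rightarrow> 'a"

definition fpoly :: "('a::field) ncpoly set" where
  "fpoly = {p. finite {w. p w \<noteq> 0} \<and> p [] = 0}"

definition nc_add :: "('a::field) ncpoly \<Rightarrow> 'a ncpoly \<Rightarrow> 'a ncpoly" where
  "nc_add p q = (\<lambda>w. p w + q w)"

definition nc_scale :: "'a::field \<Rightarrow> 'a ncpoly \<Rightarrow> 'a ncpoly" where
  "nc_scale c p = (\<lambda>w. c * p w)"

definition nc_mult :: "('a::field) ncpoly \<Rightarrow> 'a ncpoly \<Rightarrow> 'a ncpoly" where
  "nc_mult p q = (\<lambda>w. \<Sum>i\<in>{0..length w}. p (take i w) * q (drop i w))"

definition nc_mono :: "nat list \<Rightarrow> ('a::field) ncpoly" where
  "nc_mono u = (\<lambda>w. if w = u then 1 else 0)"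

fun nc_word_subst :: "(nat \<Rightarrow> ('a::field) ncpoly) \<Rightarrow> nat list \<Rightarrow> 'a ncpoly" where
  "nc_word_subst \<sigma> [] = (\<lambda>_. 0)"
| "nc_word_subst \<sigma> [a] = \<sigma> a"
| "nc_word_subst \<sigma> (a # b # w) = nc_mult (\<sigma> a) (nc_word_subst \<sigma> (b # w))"

definition nc_subst :: "(nat \<Rightarrow> ('a::field) ncpoly) \<Rightarrow> 'a ncpoly \<Rightarrow> 'a ncpoly" where
  "nc_subst \<sigma> p = (\<lambda>w. \<Sum>u\<in>{u. p u \<noteq> 0}. p u * nc_word_subst \<sigma> u w)"

inductive_set T_ideal :: "('a::field) ncpoly \<Rightarrow> 'a ncpoly set" for f where
  gen: "f \<in> T_ideal f"
| zero: "(\<lambda>_. 0) \<in> T_ideal f"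
| add: "p \<in> T_ideal f \<Longrightarrow> q \<in> T_ideal f \<Longrightarrow> nc_add p q \<in> T_ideal f"
| scale: "p \<in> T_ideal f \<Longrightarrow> nc_scale c p \<in> T_ideal f"
| mult_left: "p \<in> T_ideal f \<Longrightarrow> a \<in> fpoly \<Longrightarrow> nc_mult a p \<in> T_ideal f"
| mult_right: "p \<in> T_ideal f \<Longrightarrow> a \<in> fpoly \<Longrightarrow> nc_mult p a \<in> T_ideal f"
| endo: "p \<in> T_ideal f \<Longrightarrow> (\<And>i. \<sigma> i \<in> fpoly) \<Longrightarrow> nc_subst \<sigma> p \<in> T_ideal f"

definition x_pow :: "nat \<Rightarrow> ('a::field) ncpoly" where
  "x_pow n = nc_mono (replicate n 0)"

definition V :: "nat \<Rightarrow> ('a::field) ncpoly set" where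
  "V m = {p \<in> fpoly. \<forall>w. p w \<noteq> 0 \<longrightarrow> distinct w \<and> set w = {0..<m}}"

definition W :: "nat \<Rightarrow> nat \<Rightarrow> ('a::field) ncpoly set" where
  "W n m = V m \<inter> T_ideal (x_pow n)"

definition ncdim :: "('a::field) ncpoly set \<Rightarrow> nat" where
  "ncdim S = vector_space.dim (nc_scale :: 'a \<Rightarrow> 'a ncpoly \<Rightarrow> 'a ncpoly) S"

end

theory Submission
  imports Defs "HOL-Library.Poly_Mapping" "HOL-Combinatorics.Multiset_Permutations"
begin

text \<open>Over a field of characteristic 0 the T-ideal generated by \<open>x\<^sup>n\<close> lies in the span of the
  powers \<open>H\<^sup>n\<close> of polynomials \<open>H\<close> without constant term. This span is clearly invariant
  under endomorphisms, and it is a two-sided ideal: as the field is infinite, the coefficient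
  \<open>\<Sum>i<n. G\<^sup>i B G\<^sup>n\<^sup>-\<^sup>1\<^sup>-\<^sup>i\<close> of \<open>t\<close> in \<open>(G + t B)\<^sup>n\<close> lies in the span, and so does its derivative in
  the direction \<open>G\<^sup>2\<close>; a telescoping combination of these elements equals \<open>n A G\<^sup>n\<close>.
  The multilinear part of \<open>H\<^sup>n\<close> in \<open>x\<^sub>1, \<dots>, x\<^sub>m\<close> is a linear combination, with coefficients
  \<open>\<Prod>u\<in>B. H\<^sub>u\<close>, of the symmetrised products of the blocks of the partitions \<open>B\<close> of
  \<open>{1, \<dots>, m}\<close> into \<open>n\<close> nonempty linearly ordered blocks. Ordering the blocks of such a
  partition in its \<open>n!\<close> possible ways gives exactly the \<open>m! (m-1 choose n-1)\<close> ways of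
  cutting a permutation of \<open>{1, \<dots>, m}\<close> into \<open>n\<close> nonempty pieces, so there are
  \<open>(m choose n) (m-1)! / (n-1)!\<close> of them.\<close>

section \<open>The free algebra as a monoid algebra\<close>

text \<open>Words form the free monoid, so \<open>nat list \<Rightarrow>\<^sub>0 'a\<close> is the free unital algebra; the
  non-unital algebra of the statement is its augmentation ideal.\<close>

instantiation list :: (type) monoid_add
begin
definition zero_list_def: "0 = []"
definition plus_list_def: "xs + ys = xs @ ys"
instance by standard (auto simp: zero_list_def plus_list_def)
end

abbreviation coeff :: "('k \<Rightarrow>\<^sub>0 'b::zero) \<Rightarrow> 'k \<Rightarrow> 'b" where
  "coeff \<equiv> Poly_Mapping.lookup"

lemma coeff_mult_finite_decomp:
  fixes P Q :: "'k::monoid_add \<Rightarrow>\<^sub>0 'b::semiring_0"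
  assumes fin: "finite {(l, q). k = l + q}"
  shows "coeff (P * Q) k = (\<Sum>(l, q)\<in>{(l, q). k = l + q}. coeff P l * coeff Q q)"
proof -
  let ?D = "{(l, q). k = l + q}"
  let ?g = "\<lambda>l q. coeff P l * coeff Q q when k = l + q"
  have inner: "coeff P l * Sum_any (\<lambda>q. coeff Q q when k = l + q) = Sum_any (?g l)" for l
  proof -
    have "finite {q. (coeff Q q when k = l + q) \<noteq> 0}"
      by (rule finite_subset[OF _ finite_imageI[OF fin, of snd]]) (auto simp: image_iff)
    from Sum_any_right_distrib[OF this, of "coeff P l"] show ?thesis
      by (simp add: mult_when)
  qed
  have "coeff (P * Q) k = Sum_any (\<lambda>l. Sum_any (?g l))"
    by (simp add: lookup_mult inner)
  also have "\<dots> = Sum_any (\<lambda>(l, q). ?g l q)"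
  proof (rule Sum_any.cartesian_product)
    show "finite (fst ` ?D \<times> snd ` ?D)" using fin by simp
    show "{l. \<exists>q. ?g l q \<noteq> 0} \<times> {q. \<exists>l. ?g l q \<noteq> 0} \<subseteq> fst ` ?D \<times> snd ` ?D"
    proof
      fix x assume "x \<in> {l. \<exists>q. ?g l q \<noteq> 0} \<times> {q. \<exists>l. ?g l q \<noteq> 0}"
      then obtain q' l' where "(fst x, q') \<in> ?D" "(l', snd x) \<in> ?D"
        by (auto simp: when_def split: if_splits)
      then show "x \<in> fst ` ?D \<times> snd ` ?D"
        by (metis fst_conv snd_conv image_eqI mem_Times_iff)
    qed
  qed
  also have "\<dots> = (\<Sum>(l, q)\<in>?D. ?g l q)"
    by (rule Sum_any.expand_superset) (use fin in \<open>auto simp: when_def split: if_splits\<close>)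
  also have "\<dots> = (\<Sum>(l, q)\<in>?D. coeff P l * coeff Q q)"
    by (rule sum.cong) auto
  finally show ?thesis .
qed

lemma coeff_mult_list:
  fixes P Q :: "nat list \<Rightarrow>\<^sub>0 'b::semiring_0"
  shows "coeff (P * Q) w = (\<Sum>i\<le>length w. coeff P (take i w) * coeff Q (drop i w))"
proof -
  have D: "{(l, q). w = l + q} = (\<lambda>i. (take i w, drop i w)) ` {..length w}"
  proof (intro equalityI subsetI)
    fix x assume "x \<in> {(l, q). w = l + q}"
    then obtain l q where "x = (l, q)" "w = l @ q" by (auto simp: plus_list_def)
    then show "x \<in> (\<lambda>i. (take i w, drop i w)) ` {..length w}"
      by (intro image_eqI[of _ _ "length l"]) auto
  qed (auto simp: plus_list_def)
  have "inj_on (\<lambda>i. (take i w, drop i w)) {..length w}"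
    by (rule inj_onI) (metis atMost_iff length_take min.absorb2 prod.inject)
  then show ?thesis
    by (simp add: coeff_mult_finite_decomp D sum.reindex)
qed

lemma coeff_mult_nat_0:
  fixes P Q :: "nat \<Rightarrow>\<^sub>0 'b::semiring_0"
  shows "coeff (P * Q) 0 = coeff P 0 * coeff Q 0"
proof -
  have "{(l, q). (0::nat) = l + q} = {(0, 0)}" by auto
  with coeff_mult_finite_decomp[of 0 P Q] show ?thesis by simp
qed

lemma coeff_mult_nat_1:
  fixes P Q :: "nat \<Rightarrow>\<^sub>0 'b::semiring_0"
  shows "coeff (P * Q) 1 = coeff P 0 * coeff Q 1 + coeff P 1 * coeff Q 0"
proof -
  have "{(l, q). (1::nat) = l + q} = {(0, 1), (1, 0)}" by auto
  with coeff_mult_finite_decomp[of 1 P Q] show ?thesis by simp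
qed

type_synonym 'a ncp = "nat list \<Rightarrow>\<^sub>0 'a"

definition ncp_scale :: "'a::field \<Rightarrow> 'a ncp \<Rightarrow> 'a ncp" where
  "ncp_scale c P = Poly_Mapping.single [] c * P"

lemma coeff_ncp_scale [simp]: "coeff (ncp_scale c P) w = c * coeff P w"
proof -
  have "coeff (ncp_scale c P) w = (\<Sum>i\<in>{0}. (c when [] = take i w) * coeff P (drop i w))"
    unfolding ncp_scale_def coeff_mult_list lookup_single
    by (rule sum.mono_neutral_right) (auto simp: when_def)
  then show ?thesis by (simp add: when_def)
qed

interpretation ncp: vector_space "ncp_scale :: 'a::field \<Rightarrow> 'a ncp \<Rightarrow> 'a ncp"
  by standard (auto intro!: poly_mapping_eqI simp: lookup_add algebra_simps)

lemma ncp_scale_mult_left: "ncp_scale c P * Q = ncp_scale c (P * Q)"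
  by (simp add: ncp_scale_def mult.assoc)

lemma ncp_scale_mult_right: "P * ncp_scale c Q = ncp_scale c (P * Q)"
  by (rule poly_mapping_eqI) (simp add: coeff_mult_list sum_distrib_left algebra_simps)

lemma ncp_scale_of_nat: "ncp_scale (of_nat k) P = of_nat k * P"
  by (induction k) (simp_all add: ncp.scale_left_distrib distrib_right)

definition augmentation_ideal :: "'a::field ncp set" where
  "augmentation_ideal = {P. coeff P [] = 0}"

lemma coeff_mult_Nil:
  fixes P Q :: "nat list \<Rightarrow>\<^sub>0 'b::semiring_0"
  shows "coeff (P * Q) [] = coeff P [] * coeff Q []"
  by (simp add: coeff_mult_list)

lemma augmentation_ideal_add:
    "P \<in> augmentation_ideal \<Longrightarrow> Q \<in> augmentation_ideal \<Longrightarrow> P + Q \<in> augmentation_ideal"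
  and augmentation_ideal_scale: "P \<in> augmentation_ideal \<Longrightarrow> ncp_scale c P \<in> augmentation_ideal"
  and augmentation_ideal_mult_right: "P \<in> augmentation_ideal \<Longrightarrow> P * Q \<in> augmentation_ideal"
  by (simp_all add: augmentation_ideal_def lookup_add coeff_mult_Nil)

lemma sum_single_coeff: "(\<Sum>k\<in>Poly_Mapping.keys P. Poly_Mapping.single k (coeff P k)) = P"
  by (rule poly_mapping_eqI) (auto simp: lookup_sum lookup_single when_def in_keys_iff)

locale monoid_algebra_hom =
  fixes \<phi> :: "'k::monoid_add \<Rightarrow> 'b::semiring_1 \<Rightarrow> 'r::semiring_1"
  assumes zero: "\<phi> k 0 = 0"
    and add: "\<phi> k (a + b) = \<phi> k a + \<phi> k b"
    and mult: "\<phi> (k + l) (a * b) = \<phi> k a * \<phi> l b"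
    and one: "\<phi> 0 1 = 1"
begin

definition eval :: "('k \<Rightarrow>\<^sub>0 'b) \<Rightarrow> 'r" where
  "eval P = (\<Sum>k\<in>Poly_Mapping.keys P. \<phi> k (coeff P k))"

lemma eval_superset:
  assumes "finite K" "Poly_Mapping.keys P \<subseteq> K"
  shows "eval P = (\<Sum>k\<in>K. \<phi> k (coeff P k))"
  unfolding eval_def by (rule sum.mono_neutral_left) (use assms in \<open>auto simp: zero in_keys_iff\<close>)

lemma eval_single [simp]: "eval (Poly_Mapping.single k a) = \<phi> k a"
  by (subst eval_superset[of "{k}"]) auto

lemma eval_add [simp]: "eval (P + Q) = eval P + eval Q"
proof -
  let ?K = "Poly_Mapping.keys P \<union> Poly_Mapping.keys Q"
  have "eval (P + Q) = (\<Sum>k\<in>?K. \<phi> k (coeff P k + coeff Q k))"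
    by (subst eval_superset[of ?K]) (auto simp: lookup_add dest: subsetD[OF keys_add])
  also have "\<dots> = eval P + eval Q"
    by (simp add: add sum.distrib eval_superset[of ?K])
  finally show ?thesis .
qed

lemma eval_zero [simp]: "eval 0 = 0"
  by (simp add: eval_def)

lemma eval_sum: "eval (sum f A) = (\<Sum>x\<in>A. eval (f x))"
  by (induction A rule: infinite_finite_induct) simp_all

lemma eval_mult [simp]: "eval (P * Q) = eval P * eval Q"
proof -
  let ?KP = "Poly_Mapping.keys P" and ?KQ = "Poly_Mapping.keys Q"
  have "eval (P * Q) = eval ((\<Sum>k\<in>?KP. Poly_Mapping.single k (coeff P k)) *
      (\<Sum>l\<in>?KQ. Poly_Mapping.single l (coeff Q l)))"
    by (simp only: sum_single_coeff)
  also have "\<dots> = (\<Sum>k\<in>?KP. \<Sum>l\<in>?KQ. \<phi> k (coeff P k) * \<phi> l (coeff Q l))"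
    by (simp add: sum_product mult_single eval_sum mult)
  also have "\<dots> = eval P * eval Q"
    by (simp add: eval_def sum_product)
  finally show ?thesis .
qed

lemma eval_one [simp]: "eval 1 = 1"
  by (metis eval_single one single_one)

lemma eval_power [simp]: "eval (P ^ n) = eval P ^ n"
  by (induction n) simp_all

end

section \<open>Polarization: the span of \<open>n\<close>-th powers is a T-ideal\<close>

lemma (in vector_space) sum_powers_forward_difference:
  "(\<Sum>j\<le>Suc d. scale ((t + 1) ^ j) (c j)) - (\<Sum>j\<le>Suc d. scale (t ^ j) (c j))
     = (\<Sum>i\<le>d. scale (t ^ i) (\<Sum>j\<in>{Suc i..Suc d}. scale (of_nat (j choose i)) (c j)))"
proof -
  have binomial: "(t + 1) ^ j - t ^ j = (\<Sum>i<j. of_nat (j choose i) * t ^ i)" for j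
  proof -
    have "(t + 1) ^ j = (\<Sum>i\<le>j. of_nat (j choose i) * t ^ i)"
      by (simp add: binomial_ring)
    also have "\<dots> = (\<Sum>i<j. of_nat (j choose i) * t ^ i) + t ^ j"
      by (simp add: lessThan_Suc_atMost[symmetric])
    finally show ?thesis by simp
  qed
  have "(\<Sum>j\<le>Suc d. scale ((t + 1) ^ j) (c j)) - (\<Sum>j\<le>Suc d. scale (t ^ j) (c j))
      = (\<Sum>j\<le>Suc d. scale ((t + 1) ^ j - t ^ j) (c j))"
    by (simp add: sum_subtractf scale_left_diff_distrib)
  also have "\<dots> = (\<Sum>j\<le>Suc d. \<Sum>i<j. scale (t ^ i) (scale (of_nat (j choose i)) (c j)))"
    by (simp add: binomial scale_sum_left mult.commute)
  also have "\<dots> = (\<Sum>i<Suc d. \<Sum>j\<in>{Suc i..Suc d}. scale (t ^ i) (scale (of_nat (j choose i)) (c j)))"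
    by (rule sum.nested_swap')
  also have "\<dots> = (\<Sum>i\<le>d. scale (t ^ i) (\<Sum>j\<in>{Suc i..Suc d}. scale (of_nat (j choose i)) (c j)))"
    by (simp add: scale_sum_right scale_right_distrib scale_scale lessThan_Suc_atMost)
  finally show ?thesis .
qed

lemma (in vector_space) poly_coeff_in_subspace:
  assumes U: "subspace U" and char_0: "\<And>k::nat. of_nat (Suc k) \<noteq> (0::'a)"
  shows "(\<And>t. (\<Sum>j\<le>d. scale (t ^ j) (c j)) \<in> U) \<Longrightarrow> j \<le> d \<Longrightarrow> c j \<in> U"
proof (induction d arbitrary: c j)
  case 0
  then show ?case using "0.prems"(1)[of 0] by simp
next
  case (Suc d)
  define c' where "c' i = (\<Sum>j\<in>{Suc i..Suc d}. scale (of_nat (j choose i)) (c j))" for i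
  have "(\<Sum>i\<le>d. scale (t ^ i) (c' i)) \<in> U" for t
    using U Suc.prems(1)[of "t + 1"] Suc.prems(1)[of t]
    unfolding c'_def sum_powers_forward_difference[symmetric] by (rule subspace_diff)
  then have "c' d \<in> U" by (rule Suc.IH) simp
  moreover have "c' d = scale (of_nat (Suc d)) (c (Suc d))"
    by (simp add: c'_def)
  ultimately have "scale (of_nat (Suc d)) (c (Suc d)) \<in> U"
    by simp
  then have "scale (inverse (of_nat (Suc d))) (scale (of_nat (Suc d)) (c (Suc d))) \<in> U"
    by (rule subspace_scale[OF U])
  then have top: "c (Suc d) \<in> U"
    using char_0[of d] by simp
  have "(\<Sum>j\<le>d. scale (t ^ j) (c j)) \<in> U" for t
  proof -
    have "(\<Sum>j\<le>d. scale (t ^ j) (c j))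
        = (\<Sum>j\<le>Suc d. scale (t ^ j) (c j)) - scale (t ^ Suc d) (c (Suc d))"
      by simp
    then show ?thesis
      using Suc.prems(1)[of t] top U by (metis subspace_diff subspace_scale)
  qed
  with top Suc.IH show ?case
    using Suc.prems(2) by (cases "j = Suc d") auto
qed

text \<open>The derivative of \<open>X \<mapsto> X\<^sup>n\<close> at \<open>G\<close> in the direction \<open>B\<close>.\<close>

definition pow_deriv :: "nat \<Rightarrow> 'r::semiring_1 \<Rightarrow> 'r \<Rightarrow> 'r" where
  "pow_deriv n G B = (\<Sum>i<n. G ^ i * B * G ^ (n - 1 - i))"

lemma pow_deriv_0 [simp]: "pow_deriv 0 G B = 0"
  by (simp add: pow_deriv_def)

lemma pow_deriv_Suc: "pow_deriv (Suc n) G B = B * G ^ n + G * pow_deriv n G B"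
  by (simp add: pow_deriv_def sum.lessThan_Suc_shift sum_distrib_left mult.assoc del: sum.lessThan_Suc)

lemma pow_deriv_square: "pow_deriv n G (G * G) = of_nat n * G ^ Suc n"
  by (induction n) (simp_all add: pow_deriv_Suc algebra_simps mult_of_nat_commute)

lemma pow_deriv_mult_right: "pow_deriv n G (A * G) = (\<Sum>i<n. G ^ i * A * G ^ (n - i))"
  unfolding pow_deriv_def
  by (intro sum.cong refl) (simp add: mult.assoc power_Suc[symmetric] Suc_diff_Suc)

lemma pow_deriv_mult_left: "pow_deriv n G (G * A) = (\<Sum>i<n. G ^ Suc i * A * G ^ (n - Suc i))"
  unfolding pow_deriv_def by (intro sum.cong refl) (simp add: power_commutes flip: mult.assoc)

lemma pow_deriv_commutator:
  fixes G A :: "'r::ring_1"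
  shows "pow_deriv n G (A * G) - pow_deriv n G (G * A) = A * G ^ n - G ^ n * A"
proof -
  define S where "S i = G ^ i * A * G ^ (n - i)" for i
  have "pow_deriv n G (A * G) - pow_deriv n G (G * A) = (\<Sum>i<n. S i - S (Suc i))"
    by (simp add: pow_deriv_mult_right pow_deriv_mult_left S_def sum_subtractf)
  also have "\<dots> = S 0 - S n"
    by (rule sum_lessThan_telescope')
  finally show ?thesis by (simp add: S_def)
qed

text \<open>The derivative of \<open>X \<mapsto> pow_deriv n X A\<close> at \<open>G\<close> in the direction \<open>G\<^sup>2\<close>.\<close>

definition second_pow_deriv :: "nat \<Rightarrow> 'r::semiring_1 \<Rightarrow> 'r \<Rightarrow> 'r" where
  "second_pow_deriv n G A =
    (\<Sum>i<n. G ^ i * A * pow_deriv (n - 1 - i) G (G * G) + pow_deriv i G (G * G) * A * G ^ (n - 1 - i))"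

lemma mult_of_nat_left_commute: "X * (of_nat k * Y) = of_nat k * (X * Y :: 'r::ring_1)"
  by (metis mult.assoc mult_of_nat_commute)

lemma second_pow_deriv_eq:
  fixes G A :: "'r::ring_1"
  shows "second_pow_deriv n G A = (\<Sum>i<n. of_nat (n - 1 - i) * (G ^ i * A * G ^ (n - i))
    + of_nat i * (G ^ Suc i * A * G ^ (n - Suc i)))"
  unfolding second_pow_deriv_def
proof (intro sum.cong refl)
  fix i assume "i \<in> {..<n}"
  then have "Suc (n - 1 - i) = n - i" by simp
  then have "G ^ i * A * pow_deriv (n - 1 - i) G (G * G) = of_nat (n - 1 - i) * (G ^ i * A * G ^ (n - i))"
    unfolding pow_deriv_square mult.assoc mult_of_nat_left_commute by (simp only:)
  moreover have "pow_deriv i G (G * G) * A * G ^ (n - 1 - i) = of_nat i * (G ^ Suc i * A * G ^ (n - Suc i))"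
    unfolding pow_deriv_square mult.assoc by simp
  ultimately show "G ^ i * A * pow_deriv (n - 1 - i) G (G * G) + pow_deriv i G (G * G) * A * G ^ (n - 1 - i)
      = of_nat (n - 1 - i) * (G ^ i * A * G ^ (n - i)) + of_nat i * (G ^ Suc i * A * G ^ (n - Suc i))"
    by simp
qed

text \<open>With \<open>S p = G\<^sup>p A G\<^sup>n\<^sup>-\<^sup>p\<close>, the three terms on the right are
  \<open>\<Sum>p\<le>n. ((n-1-p) + (p-1)) S p\<close>, \<open>\<Sum>p<n. S p\<close> and \<open>(n-1) \<Sum>p\<in>{1..n}. S p\<close> (with truncated
  subtraction), so the right-hand side telescopes to \<open>n S 0\<close>.\<close>

lemma mult_power_polarization_identity:
  fixes G A :: "'r::ring_1"
  shows "of_nat n * (A * G ^ n) =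
    second_pow_deriv n G A + pow_deriv n G (A * G) - of_nat (n - 1) * pow_deriv n G (G * A)"
proof -
  define S where "S i = G ^ i * A * G ^ (n - i)" for i
  define T where "T i = of_nat (n - i) * S i" for i
  have "of_nat (n - 1 - i) * S i + of_nat i * S (Suc i) + S i - of_nat (n - 1) * S (Suc i)
      = T i - T (Suc i)" if "i < n" for i
  proof -
    have "n - i = Suc (n - 1 - i)" "n - 1 = i + (n - Suc i)"
      using that by simp_all
    then have "of_nat (n - i) = of_nat (n - 1 - i) + (1 :: 'r)"
      and "of_nat (n - 1) = of_nat i + (of_nat (n - Suc i) :: 'r)"
      by (metis add.commute of_nat_Suc, metis of_nat_add)
    then show ?thesis by (simp add: T_def algebra_simps)
  qed
  then have "second_pow_deriv n G A + pow_deriv n G (A * G) - of_nat (n - 1) * pow_deriv n G (G * A)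
      = (\<Sum>i<n. T i - T (Suc i))"
    by (simp add: second_pow_deriv_eq pow_deriv_mult_right pow_deriv_mult_left sum_distrib_left
        S_def flip: sum.distrib sum_subtractf)
  also have "\<dots> = of_nat n * (A * G ^ n)"
    by (simp only: sum_lessThan_telescope') (simp add: T_def S_def)
  finally show ?thesis ..
qed

lemma coeff_power_0:
  fixes P :: "nat \<Rightarrow>\<^sub>0 'r::ring_1"
  shows "coeff (P ^ n) 0 = coeff P 0 ^ n"
  by (induction n) (simp_all add: coeff_mult_nat_0 lookup_one)

lemma coeff_power_1:
  fixes P :: "nat \<Rightarrow>\<^sub>0 'r::ring_1"
  shows "coeff (P ^ n) 1 = pow_deriv n (coeff P 0) (coeff P 1)"
proof (induction n)
  case (Suc n)
  have "coeff (P ^ Suc n) 1 = coeff P 0 * coeff (P ^ n) 1 + coeff P 1 * coeff (P ^ n) 0"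
    by (simp only: power_Suc coeff_mult_nat_1)
  then show ?case
    by (simp only: Suc.IH coeff_power_0 pow_deriv_Suc add.commute)
qed (simp add: lookup_one)

text \<open>Polynomials in a central indeterminate \<open>t\<close> with coefficients in the free algebra are
  modelled as \<open>nat \<Rightarrow>\<^sub>0 'a ncp\<close>; \<open>eval_at t\<close> substitutes a scalar for \<open>t\<close>.\<close>

lemma monoid_algebra_hom_eval_at:
  "monoid_algebra_hom (\<lambda>k P. ncp_scale (t ^ k) (P :: 'a::field ncp))"
  by unfold_locales
    (simp_all add: ncp.scale_right_distrib ncp_scale_mult_left ncp_scale_mult_right power_add)

definition eval_at :: "'a::field \<Rightarrow> (nat \<Rightarrow>\<^sub>0 'a ncp) \<Rightarrow> 'a ncp" where
  "eval_at t = monoid_algebra_hom.eval (\<lambda>k P. ncp_scale (t ^ k) P)"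

lemmas eval_at_single = monoid_algebra_hom.eval_single[OF monoid_algebra_hom_eval_at, folded eval_at_def]
lemmas eval_at_add = monoid_algebra_hom.eval_add[OF monoid_algebra_hom_eval_at, folded eval_at_def]
lemmas eval_at_mult = monoid_algebra_hom.eval_mult[OF monoid_algebra_hom_eval_at, folded eval_at_def]
lemmas eval_at_power = monoid_algebra_hom.eval_power[OF monoid_algebra_hom_eval_at, folded eval_at_def]
lemmas eval_at_sum = monoid_algebra_hom.eval_sum[OF monoid_algebra_hom_eval_at, folded eval_at_def]

lemma coeff_in_subspace_if_eval_at_in:
  fixes P :: "nat \<Rightarrow>\<^sub>0 'a::field_char_0 ncp"
  assumes U: "ncp.subspace U" and eval: "\<And>t. eval_at t P \<in> U"
  shows "coeff P k \<in> U"
proof -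
  define d where "d = Max (insert k (Poly_Mapping.keys P))"
  have "eval_at t P = (\<Sum>j\<le>d. ncp_scale (t ^ j) (coeff P j))" for t
    unfolding eval_at_def d_def
    by (rule monoid_algebra_hom.eval_superset[OF monoid_algebra_hom_eval_at]) auto
  with eval have "\<And>t. (\<Sum>j\<le>d. ncp_scale (t ^ j) (coeff P j)) \<in> U" by simp
  then show ?thesis
    by (rule ncp.poly_coeff_in_subspace[OF U, rotated]) (simp_all add: d_def del: of_nat_Suc)
qed

lemma ncp_subspace_augmentation_ideal: "ncp.subspace augmentation_ideal"
  by (simp add: ncp.subspace_def augmentation_ideal_add augmentation_ideal_scale)
     (simp add: augmentation_ideal_def)

definition powers_span :: "nat \<Rightarrow> 'a::field ncp set" where
  "powers_span n = ncp.span ((\<lambda>H. H ^ n) ` augmentation_ideal)"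

lemma ncp_subspace_powers_span: "ncp.subspace (powers_span n)"
  by (simp add: powers_span_def)

lemma power_in_powers_span: "H \<in> augmentation_ideal \<Longrightarrow> H ^ n \<in> powers_span n"
  unfolding powers_span_def by (rule ncp.span_base) blast

lemma powers_span_hom_image:
  assumes f: "module_hom ncp_scale s f" and S: "module.subspace s S"
    and powers: "\<And>H. H \<in> augmentation_ideal \<Longrightarrow> f (H ^ n) \<in> S"
    and P: "P \<in> powers_span n"
  shows "f P \<in> S"
proof -
  have "powers_span n \<subseteq> f -` S"
    unfolding powers_span_def
    by (rule ncp.span_minimal) (use powers module_hom.subspace_vimage[OF f S] in auto)
  with P show ?thesis by auto
qed

lemma powers_span_subset_augmentation_ideal:
  assumes "n \<noteq> 0"
  shows "powers_span n \<subseteq> augmentation_ideal"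
  unfolding powers_span_def
proof (rule ncp.span_minimal[OF _ ncp_subspace_augmentation_ideal])
  show "(\<lambda>H. H ^ n) ` augmentation_ideal \<subseteq> augmentation_ideal"
    using assms by (auto simp: power_eq_if augmentation_ideal_mult_right)
qed

lemma pow_deriv_in_powers_span:
  fixes G B :: "'a::field_char_0 ncp"
  assumes G: "G \<in> augmentation_ideal" and B: "B \<in> augmentation_ideal"
  shows "pow_deriv n G B \<in> powers_span n"
proof -
  let ?P = "Poly_Mapping.single (0::nat) G + Poly_Mapping.single 1 B"
  have "eval_at t (?P ^ n) = (G + ncp_scale t B) ^ n" for t
    by (simp add: eval_at_power eval_at_add eval_at_single)
  moreover have "G + ncp_scale t B \<in> augmentation_ideal" for t
    using G B by (simp add: augmentation_ideal_add augmentation_ideal_scale)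
  ultimately have "eval_at t (?P ^ n) \<in> powers_span n" for t
    by (simp add: power_in_powers_span)
  then have "coeff (?P ^ n) 1 \<in> powers_span n"
    by (rule coeff_in_subspace_if_eval_at_in[OF ncp_subspace_powers_span])
  then show ?thesis
    by (simp only: coeff_power_1) (simp add: lookup_add lookup_single)
qed

lemma second_pow_deriv_in_powers_span:
  fixes G A :: "'a::field_char_0 ncp"
  assumes G: "G \<in> augmentation_ideal" and A: "A \<in> augmentation_ideal"
  shows "second_pow_deriv n G A \<in> powers_span n"
proof -
  let ?K = "Poly_Mapping.single (0::nat) G + Poly_Mapping.single 1 (G * G)"
  let ?Q = "pow_deriv n ?K (Poly_Mapping.single 0 A)"
  have "eval_at t ?Q = pow_deriv n (G + ncp_scale t (G * G)) A" for t
    by (simp add: pow_deriv_def eval_at_sum eval_at_mult eval_at_power eval_at_add eval_at_single)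
  moreover have "G + ncp_scale t (G * G) \<in> augmentation_ideal" for t
    using G by (simp add: augmentation_ideal_add augmentation_ideal_scale augmentation_ideal_mult_right)
  ultimately have "eval_at t ?Q \<in> powers_span n" for t
    by (simp add: A pow_deriv_in_powers_span)
  then have "coeff ?Q 1 \<in> powers_span n"
    by (rule coeff_in_subspace_if_eval_at_in[OF ncp_subspace_powers_span])
  then show ?thesis
    by (simp only: pow_deriv_def[of n] lookup_sum coeff_mult_nat_0 coeff_mult_nat_1 coeff_power_0
        coeff_power_1) (simp add: second_pow_deriv_def lookup_add lookup_single)
qed

lemma mult_power_in_powers_span:
  fixes G A :: "'a::field_char_0 ncp"
  assumes G: "G \<in> augmentation_ideal" and A: "A \<in> augmentation_ideal" and n: "n \<noteq> 0"
  shows "A * G ^ n \<in> powers_span n" and "G ^ n * A \<in> powers_span n"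
proof -
  have AG: "pow_deriv n G (A * G) \<in> powers_span n" and GA: "pow_deriv n G (G * A) \<in> powers_span n"
    using G A by (simp_all add: pow_deriv_in_powers_span augmentation_ideal_mult_right)
  have GA': "of_nat (n - 1) * pow_deriv n G (G * A) \<in> powers_span n"
    using GA by (simp add: ncp_scale_of_nat[symmetric] ncp.subspace_scale ncp_subspace_powers_span)
  have "of_nat n * (A * G ^ n) \<in> powers_span n"
    unfolding mult_power_polarization_identity
    by (intro ncp.subspace_diff[OF ncp_subspace_powers_span] ncp.subspace_add[OF ncp_subspace_powers_span]
        second_pow_deriv_in_powers_span[OF G A] AG GA')
  then have "ncp_scale (inverse (of_nat n)) (ncp_scale (of_nat n) (A * G ^ n)) \<in> powers_span n"
    by (simp add: ncp_scale_of_nat ncp.subspace_scale ncp_subspace_powers_span)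
  then show left: "A * G ^ n \<in> powers_span n"
    using n by simp
  have "G ^ n * A = A * G ^ n - (pow_deriv n G (A * G) - pow_deriv n G (G * A))"
    by (simp add: pow_deriv_commutator)
  then show "G ^ n * A \<in> powers_span n"
    using left AG GA ncp_subspace_powers_span by (metis ncp.subspace_diff)
qed

lemma powers_span_mult_left:
  fixes A :: "'a::field_char_0 ncp"
  assumes A: "A \<in> augmentation_ideal" and n: "n \<noteq> 0" and P: "P \<in> powers_span n"
  shows "A * P \<in> powers_span n"
proof -
  have "module_hom ncp_scale ncp_scale ((*) A)"
    by (simp add: module_hom_iff ncp.module_axioms distrib_left ncp_scale_mult_right)
  from powers_span_hom_image[OF this ncp_subspace_powers_span _ P]
  show ?thesis using mult_power_in_powers_span(1)[OF _ A n] by blast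
qed

lemma powers_span_mult_right:
  fixes A :: "'a::field_char_0 ncp"
  assumes A: "A \<in> augmentation_ideal" and n: "n \<noteq> 0" and P: "P \<in> powers_span n"
  shows "P * A \<in> powers_span n"
proof -
  have "module_hom ncp_scale ncp_scale (\<lambda>P. P * A)"
    by (simp add: module_hom_iff ncp.module_axioms distrib_right ncp_scale_mult_left)
  from powers_span_hom_image[OF this ncp_subspace_powers_span _ P]
  show ?thesis using mult_power_in_powers_span(2)[OF _ A n] by blast
qed

lemma monoid_algebra_hom_subst:
  "monoid_algebra_hom (\<lambda>w c. ncp_scale c (prod_list (map (\<sigma> :: nat \<Rightarrow> 'a::field ncp) w)))"
  by unfold_locales
    (simp_all add: ncp.scale_left_distrib plus_list_def zero_list_def ncp_scale_mult_left
      ncp_scale_mult_right)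

definition subst :: "(nat \<Rightarrow> 'a::field ncp) \<Rightarrow> 'a ncp \<Rightarrow> 'a ncp" where
  "subst \<sigma> = monoid_algebra_hom.eval (\<lambda>w c. ncp_scale c (prod_list (map \<sigma> w)))"

lemmas subst_add = monoid_algebra_hom.eval_add[OF monoid_algebra_hom_subst, folded subst_def]
lemmas subst_mult = monoid_algebra_hom.eval_mult[OF monoid_algebra_hom_subst, folded subst_def]
lemmas subst_power = monoid_algebra_hom.eval_power[OF monoid_algebra_hom_subst, folded subst_def]
lemmas subst_single = monoid_algebra_hom.eval_single[OF monoid_algebra_hom_subst, folded subst_def]

lemma subst_scale: "subst \<sigma> (ncp_scale c P) = ncp_scale c (subst \<sigma> P)"
  by (simp add: ncp_scale_def subst_mult subst_single zero_list_def ncp_scale_mult_left)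

lemma subst_augmentation_ideal:
  assumes \<sigma>: "\<And>i. \<sigma> i \<in> augmentation_ideal" and P: "P \<in> augmentation_ideal"
  shows "subst \<sigma> P \<in> augmentation_ideal"
  unfolding subst_def monoid_algebra_hom.eval_def[OF monoid_algebra_hom_subst]
proof (intro ncp.subspace_sum[OF ncp_subspace_augmentation_ideal] augmentation_ideal_scale)
  fix w assume "w \<in> Poly_Mapping.keys P"
  then obtain i w' where "w = i # w'"
    using P by (cases w) (auto simp: augmentation_ideal_def in_keys_iff)
  then show "prod_list (map \<sigma> w) \<in> augmentation_ideal"
    using \<sigma> by (simp add: augmentation_ideal_mult_right)
qed

lemma powers_span_subst:
  assumes \<sigma>: "\<And>i. \<sigma> i \<in> augmentation_ideal" and P: "P \<in> powers_span n"
  shows "subst \<sigma> P \<in> powers_span n"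
proof -
  have "module_hom ncp_scale ncp_scale (subst \<sigma>)"
    by (simp add: module_hom_iff ncp.module_axioms subst_add subst_scale)
  from powers_span_hom_image[OF this ncp_subspace_powers_span _ P]
  show ?thesis
    using \<sigma> by (simp add: subst_power subst_augmentation_ideal power_in_powers_span)
qed

section \<open>The T-ideal generated by \<open>x\<^sup>n\<close>\<close>

lemma fpoly_eq_coeff_augmentation_ideal: "fpoly = coeff ` augmentation_ideal"
proof
  show "fpoly \<subseteq> coeff ` augmentation_ideal"
  proof
    fix p assume "p \<in> fpoly"
    then have "p = coeff (Abs_poly_mapping p)" "Abs_poly_mapping p \<in> augmentation_ideal"
      by (simp_all add: fpoly_def augmentation_ideal_def Abs_poly_mapping_inverse)
    then show "p \<in> coeff ` augmentation_ideal" by blast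
  qed
  show "coeff ` augmentation_ideal \<subseteq> fpoly"
    by (auto simp: fpoly_def augmentation_ideal_def)
qed

lemma nc_add_coeff: "nc_add (coeff P) (coeff Q) = coeff (P + Q)"
  by (simp add: nc_add_def fun_eq_iff lookup_add)

lemma nc_scale_coeff: "nc_scale c (coeff P) = coeff (ncp_scale c P)"
  by (simp add: nc_scale_def fun_eq_iff)

lemma nc_mult_coeff: "nc_mult (coeff P) (coeff Q) = coeff (P * Q)"
  by (simp add: nc_mult_def fun_eq_iff coeff_mult_list atLeast0AtMost)

lemma x_pow_coeff: "x_pow n = coeff (Poly_Mapping.single [0] 1 ^ n)"
proof -
  have "Poly_Mapping.single [0::nat] 1 ^ n = Poly_Mapping.single (replicate n 0) (1::'a)"
  proof (induction n)
    case 0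
    show ?case by (metis power_0 replicate_0 single_one zero_list_def)
  next
    case (Suc n)
    then show ?case by (simp add: mult_single plus_list_def)
  qed
  then show ?thesis
    by (auto simp: x_pow_def nc_mono_def fun_eq_iff lookup_single when_def)
qed

lemma nc_word_subst_coeff:
  assumes "\<And>i. \<sigma>' i = coeff (\<sigma> i)" and "w \<noteq> []"
  shows "nc_word_subst \<sigma>' w = coeff (prod_list (map \<sigma> w))"
  using assms(2)
proof (induction w)
  case (Cons i w)
  then show ?case
    using assms(1) by (cases w) (simp_all add: nc_mult_coeff)
qed simp

lemma nc_subst_coeff:
  assumes \<sigma>: "\<And>i. \<sigma>' i = coeff (\<sigma> i)" and P: "P \<in> augmentation_ideal"
  shows "nc_subst \<sigma>' (coeff P) = coeff (subst \<sigma> P)"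
proof
  fix w
  have "nc_subst \<sigma>' (coeff P) w = (\<Sum>u\<in>Poly_Mapping.keys P. coeff P u * nc_word_subst \<sigma>' u w)"
    by (simp add: nc_subst_def keys.rep_eq)
  also have "\<dots> = (\<Sum>u\<in>Poly_Mapping.keys P. coeff P u * coeff (prod_list (map \<sigma> u)) w)"
  proof (rule sum.cong)
    fix u assume "u \<in> Poly_Mapping.keys P"
    then have "u \<noteq> []" using P by (auto simp: augmentation_ideal_def in_keys_iff)
    then show "coeff P u * nc_word_subst \<sigma>' u w = coeff P u * coeff (prod_list (map \<sigma> u)) w"
      by (simp add: nc_word_subst_coeff[OF \<sigma>])
  qed simp
  also have "\<dots> = coeff (subst \<sigma> P) w"
    by (simp add: subst_def monoid_algebra_hom.eval_def[OF monoid_algebra_hom_subst] lookup_sum)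
  finally show "nc_subst \<sigma>' (coeff P) w = coeff (subst \<sigma> P) w" .
qed

lemma T_ideal_x_pow_subset_powers_span:
  assumes n: "n \<noteq> 0"
  shows "T_ideal (x_pow n :: 'a::field_char_0 ncpoly) \<subseteq> coeff ` powers_span n"
proof
  fix p :: "'a ncpoly"
  assume "p \<in> T_ideal (x_pow n)"
  then show "p \<in> coeff ` powers_span n"
  proof (induction rule: T_ideal.induct)
    case gen
    have "Poly_Mapping.single [0] (1::'a) \<in> augmentation_ideal"
      by (simp add: augmentation_ideal_def lookup_single)
    then show ?case by (simp add: x_pow_coeff power_in_powers_span)
  next
    case zero
    have "(\<lambda>_. 0 :: 'a) = coeff 0" by (simp add: fun_eq_iff)
    then show ?case using ncp.subspace_0[OF ncp_subspace_powers_span] by blast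
  next
    case (add p q)
    then obtain P Q where P: "P \<in> powers_span n" "p = coeff P" and Q: "Q \<in> powers_span n" "q = coeff Q"
      by blast
    have "nc_add p q = coeff (P + Q)" using P Q by (simp add: nc_add_coeff)
    then show ?case using ncp.subspace_add[OF ncp_subspace_powers_span P(1) Q(1)] by (rule image_eqI)
  next
    case (scale p c)
    then obtain P where P: "P \<in> powers_span n" "p = coeff P"
      by blast
    have "nc_scale c p = coeff (ncp_scale c P)" using P by (simp add: nc_scale_coeff)
    then show ?case using ncp.subspace_scale[OF ncp_subspace_powers_span P(1)] by (rule image_eqI)
  next
    case (mult_left p a)
    then obtain P A where P: "P \<in> powers_span n" "p = coeff P" and A: "A \<in> augmentation_ideal" "a = coeff A"
      by (auto simp: fpoly_eq_coeff_augmentation_ideal)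
    have "nc_mult a p = coeff (A * P)" using P A by (simp add: nc_mult_coeff)
    then show ?case using powers_span_mult_left[OF A(1) n P(1)] by (rule image_eqI)
  next
    case (mult_right p a)
    then obtain P A where P: "P \<in> powers_span n" "p = coeff P" and A: "A \<in> augmentation_ideal" "a = coeff A"
      by (auto simp: fpoly_eq_coeff_augmentation_ideal)
    have "nc_mult p a = coeff (P * A)" using P A by (simp add: nc_mult_coeff)
    then show ?case using powers_span_mult_right[OF A(1) n P(1)] by (rule image_eqI)
  next
    case (endo p \<sigma>')
    have "\<forall>i. \<exists>S. S \<in> augmentation_ideal \<and> \<sigma>' i = coeff S"
      using endo.hyps(2) by (auto simp: fpoly_eq_coeff_augmentation_ideal)
    then obtain \<sigma> where \<sigma>: "\<And>i. \<sigma> i \<in> augmentation_ideal" "\<And>i. \<sigma>' i = coeff (\<sigma> i)"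
      by metis
    obtain P where P: "P \<in> powers_span n" "p = coeff P"
      using endo.IH by blast
    have "nc_subst \<sigma>' p = coeff (subst \<sigma> P)"
      using P powers_span_subset_augmentation_ideal[OF n] by (auto intro!: nc_subst_coeff \<sigma>(2))
    then show ?case using powers_span_subst[OF \<sigma>(1) P(1)] by (rule image_eqI)
  qed
qed

section \<open>Multilinear parts of \<open>n\<close>-th powers and Lah partitions\<close>

definition compositions :: "nat \<Rightarrow> 'b list \<Rightarrow> 'b list list set" where
  "compositions n w = {bs. length bs = n \<and> [] \<notin> set bs \<and> concat bs = w}"

lemma compositions_0: "compositions 0 w = (if w = [] then {[]} else {})"
  by (auto simp: compositions_def)

lemma compositions_Nil: "compositions (Suc n) [] = {}"
  by (auto simp: compositions_def length_Suc_conv)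

lemma compositions_Suc:
  "compositions (Suc n) w = (\<Union>i<length w. (#) (take (Suc i) w) ` compositions n (drop (Suc i) w))"
proof (intro equalityI subsetI)
  fix bs assume bs: "bs \<in> compositions (Suc n) w"
  then obtain u bs' where bs_eq: "bs = u # bs'" by (cases bs) (auto simp: compositions_def)
  define i where "i = length u - 1"
  have u: "u \<noteq> []" "w = u @ concat bs'" "bs' \<in> compositions n (concat bs')"
    using bs bs_eq by (auto simp: compositions_def)
  then have "i < length w" "take (Suc i) w = u" "drop (Suc i) w = concat bs'"
    by (auto simp: i_def Suc_diff_1 length_greater_0_conv[symmetric] simp del: length_greater_0_conv)
  then show "bs \<in> (\<Union>i<length w. (#) (take (Suc i) w) ` compositions n (drop (Suc i) w))"
    unfolding bs_eq using u(3) by (intro UN_I[of i]) simp_all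
qed (auto simp: compositions_def)

lemma finite_compositions: "finite (compositions n w)"
  by (induction n arbitrary: w) (simp_all add: compositions_0 compositions_Suc)

lemma sum_compositions_Suc:
  "(\<Sum>bs\<in>compositions (Suc n) w. f bs)
     = (\<Sum>i<length w. \<Sum>bs\<in>compositions n (drop (Suc i) w). f (take (Suc i) w # bs))"
proof -
  have "(\<Sum>bs\<in>compositions (Suc n) w. f bs)
      = (\<Sum>i<length w. \<Sum>bs\<in>(#) (take (Suc i) w) ` compositions n (drop (Suc i) w). f bs)"
    unfolding compositions_Suc
    by (rule sum.UNION_disjoint) (auto simp: finite_compositions dest: arg_cong[where f = length])
  also have "\<dots> = (\<Sum>i<length w. \<Sum>bs\<in>compositions n (drop (Suc i) w). f (take (Suc i) w # bs))"
    by (simp add: sum.reindex)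
  finally show ?thesis .
qed

lemma sum_lessThan_choose: "(\<Sum>k<m. k choose n) = m choose Suc n"
  by (induction m) simp_all

lemma card_compositions:
  assumes "w \<noteq> []"
  shows "card (compositions (Suc n) w) = (length w - 1) choose n"
  using assms
proof (induction n arbitrary: w)
  case 0
  then have "compositions (Suc 0) w = {[w]}"
    by (auto simp: compositions_def length_Suc_conv)
  then show ?case by simp
next
  case (Suc n)
  let ?h = "\<lambda>k. if k = 0 then 0 else (k - 1) choose n"
  have "card (compositions (Suc (Suc n)) w) = (\<Sum>i<length w. card (compositions (Suc n) (drop (Suc i) w)))"
    by (simp only: card_eq_sum sum_compositions_Suc)
  also have "\<dots> = (\<Sum>i<length w. ?h (length w - Suc i))"
    by (intro sum.cong refl) (simp add: Suc.IH compositions_Nil)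
  also have "\<dots> = (\<Sum>k<length w. ?h k)"
    by (rule sum.nat_diff_reindex)
  also have "\<dots> = (length w - 1) choose Suc n"
    using Suc.prems
    by (cases "length w") (simp_all add: sum.lessThan_Suc_shift sum_lessThan_choose del: sum.lessThan_Suc)
  finally show ?case .
qed

lemma coeff_power_compositions:
  assumes H: "H \<in> augmentation_ideal"
  shows "coeff (H ^ n) w = (\<Sum>bs\<in>compositions n w. prod_list (map (coeff H) bs))"
proof (induction n arbitrary: w)
  case 0
  then show ?case by (simp add: compositions_0 lookup_one zero_list_def when_def)
next
  case (Suc n)
  have "coeff (H ^ Suc n) w = (\<Sum>i\<le>length w. coeff H (take i w) * coeff (H ^ n) (drop i w))"
    by (simp add: coeff_mult_list)
  also have "\<dots> = (\<Sum>i<length w. coeff H (take (Suc i) w) * coeff (H ^ n) (drop (Suc i) w))"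
    using H by (simp add: sum.atMost_shift augmentation_ideal_def)
  also have "\<dots> = (\<Sum>bs\<in>compositions (Suc n) w. prod_list (map (coeff H) bs))"
    by (simp add: sum_compositions_Suc Suc.IH sum_distrib_left)
  finally show ?case .
qed

lemma distinct_blocks: "distinct (concat bs) \<Longrightarrow> [] \<notin> set bs \<Longrightarrow> distinct bs"
proof (induction bs)
  case (Cons u bs)
  then obtain x where "x \<in> set u" by (cases u) auto
  with Cons show ?case by auto
qed simp

lemma blocks_eqI:
  assumes "concat bs = concat bs'" "distinct (concat bs)" "[] \<notin> set bs" "[] \<notin> set bs'"
    and "set bs = set bs'"
  shows "bs = bs'"
  using assms
proof (induction bs arbitrary: bs')
  case Nil
  then show ?case by simp
next
  case (Cons u bs)
  then obtain v bs'' where bs': "bs' = v # bs''" by (cases bs') auto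
  have "u \<noteq> []" "v \<noteq> []" using Cons.prems bs' by auto
  then have hd: "hd u = hd v" using Cons.prems(1) bs' by (metis concat.simps(2) hd_append2)
  have "u = v"
  proof (rule ccontr)
    assume "u \<noteq> v"
    then have "u \<in> set bs''" using Cons.prems(5) bs' by auto
    then have "hd u \<in> set (concat bs'')" using \<open>u \<noteq> []\<close> by (auto intro: bexI[of _ u])
    moreover have "distinct (v @ concat bs'')" using Cons.prems(1,2) bs' by simp
    ultimately show False using hd hd_in_set[OF \<open>v \<noteq> []\<close>] by auto
  qed
  have "distinct (u # bs)"
    by (rule distinct_blocks) (use Cons.prems in auto)
  moreover have "distinct (v # bs'')"
    by (rule distinct_blocks) (use Cons.prems bs' in \<open>simp_all only:\<close>)
  ultimately have "set bs = set bs''" using Cons.prems(5) bs' \<open>u = v\<close> by auto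
  with Cons.IH[of bs''] Cons.prems bs' \<open>u = v\<close> show ?case by simp
qed

definition block_seqs :: "nat \<Rightarrow> nat \<Rightarrow> nat list list set" where
  "block_seqs m n = {bs. length bs = n \<and> [] \<notin> set bs \<and> concat bs \<in> permutations_of_set {0..<m}}"

text \<open>Partitions of \<open>{0..<m}\<close> into \<open>n\<close> nonempty linearly ordered blocks.\<close>

definition lah_partitions :: "nat \<Rightarrow> nat \<Rightarrow> nat list set set" where
  "lah_partitions m n = set ` block_seqs m n"

lemma block_seqs_eq_UN_compositions:
  "block_seqs m n = (\<Union>w\<in>permutations_of_set {0..<m}. compositions n w)"
  by (auto simp: block_seqs_def compositions_def)

lemma finite_block_seqs: "finite (block_seqs m n)"
  by (simp add: block_seqs_eq_UN_compositions finite_compositions)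

lemma finite_lah_partitions: "finite (lah_partitions m n)"
  by (simp add: lah_partitions_def finite_block_seqs)

lemma card_block_seqs:
  assumes "n \<noteq> 0" "m \<noteq> 0"
  shows "card (block_seqs m n) = fact m * ((m - 1) choose (n - 1))"
proof -
  have "card (block_seqs m n) = (\<Sum>w\<in>permutations_of_set {0..<m}. card (compositions n w))"
    unfolding block_seqs_eq_UN_compositions
    by (rule card_UN_disjoint) (auto simp: finite_compositions, auto simp: compositions_def)
  also have "\<dots> = (\<Sum>w\<in>permutations_of_set {0..<m}. (m - 1) choose (n - 1))"
  proof (rule sum.cong)
    fix w assume "w \<in> permutations_of_set {0..<m}"
    then have "length w = m" by (simp add: length_finite_permutations_of_set)
    then show "card (compositions n w) = (m - 1) choose (n - 1)"
      using assms card_compositions[of w "n - 1"] by auto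
  qed simp
  finally show ?thesis by simp
qed

lemma mset_concat_eq: "mset bs = mset bs' \<Longrightarrow> mset (concat bs) = mset (concat bs')"
  by (simp add: mset_concat mset_map flip: sum_mset_sum_list)

lemma permutation_in_block_seqs:
  assumes bs: "bs \<in> block_seqs m n" and bs': "bs' \<in> permutations_of_set (set bs)"
  shows "bs' \<in> block_seqs m n"
proof -
  have "distinct bs" using bs by (simp add: block_seqs_def permutations_of_set_def distinct_blocks)
  then have "mset bs' = mset bs"
    using bs' by (simp add: permutations_of_set_def set_eq_iff_mset_eq_distinct[symmetric])
  then have "mset (concat bs') = mset (concat bs)" and "length bs' = length bs"
    by (rule mset_concat_eq, rule mset_eq_length)
  moreover from this(1) have "set (concat bs') = set (concat bs)"
    and "distinct (concat bs') = distinct (concat bs)"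
    by (rule mset_eq_setD, rule mset_eq_imp_distinct_iff)
  ultimately show ?thesis
    using bs bs' by (simp add: block_seqs_def permutations_of_set_def)
qed

lemma block_seqs_eq_UN_lah_partitions:
  "block_seqs m n = (\<Union>B\<in>lah_partitions m n. permutations_of_set B)"
proof (intro equalityI subsetI)
  fix bs assume "bs \<in> block_seqs m n"
  moreover from this have "distinct bs"
    by (simp add: block_seqs_def permutations_of_set_def distinct_blocks)
  ultimately show "bs \<in> (\<Union>B\<in>lah_partitions m n. permutations_of_set B)"
    by (auto simp: lah_partitions_def)
qed (auto simp: lah_partitions_def intro: permutation_in_block_seqs)

lemma permutation_of_lah_partition_in_block_seqs:
  assumes "B \<in> lah_partitions m n" and "bs \<in> permutations_of_set B"
  shows "bs \<in> block_seqs m n"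
proof -
  obtain bs' where "bs' \<in> block_seqs m n" "B = set bs'"
    using assms(1) by (auto simp: lah_partitions_def)
  with assms(2) show ?thesis by (simp add: permutation_in_block_seqs)
qed

lemma distinct_compositions: "distinct w \<Longrightarrow> bs \<in> compositions n w \<Longrightarrow> distinct bs"
  by (simp add: compositions_def distinct_blocks)

lemma inj_on_set_compositions: "distinct w \<Longrightarrow> inj_on set (compositions n w)"
  by (intro inj_onI blocks_eqI) (auto simp: compositions_def)

lemma lah_partitions_containing_word:
  assumes w: "w \<in> permutations_of_set {0..<m}"
  shows "{B \<in> lah_partitions m n. w \<in> concat ` permutations_of_set B} = set ` compositions n w"
proof -
  have blocks: "compositions n w = {bs \<in> block_seqs m n. concat bs = w}"
    using w by (auto simp: compositions_def block_seqs_def)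
  show ?thesis
  proof (intro equalityI subsetI)
    fix B assume B: "B \<in> {B \<in> lah_partitions m n. w \<in> concat ` permutations_of_set B}"
    then obtain bs where bs: "bs \<in> permutations_of_set B" "w = concat bs"
      by blast
    with B have "bs \<in> block_seqs m n"
      by (simp add: permutation_of_lah_partition_in_block_seqs)
    with bs have "bs \<in> compositions n w" "B = set bs"
      unfolding blocks by (simp_all add: permutations_of_set_def)
    then show "B \<in> set ` compositions n w" by blast
  next
    fix B assume "B \<in> set ` compositions n w"
    then obtain bs where bs: "bs \<in> compositions n w" "B = set bs" by blast
    moreover have "distinct bs"
      using permutations_of_setD(2)[OF w] bs(1) by (rule distinct_compositions)
    ultimately have "bs \<in> permutations_of_set B" "bs \<in> block_seqs m n" "w = concat bs"
      unfolding blocks by (simp_all add: permutations_of_set_def)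
    then show "B \<in> {B \<in> lah_partitions m n. w \<in> concat ` permutations_of_set B}"
      using bs(2) by (auto simp: lah_partitions_def)
  qed
qed

lemma card_block_seqs_lah_partitions:
  "card (block_seqs m n) = fact n * card (lah_partitions m n)"
proof -
  have "card (block_seqs m n) = (\<Sum>B\<in>lah_partitions m n. card (permutations_of_set B))"
    unfolding block_seqs_eq_UN_lah_partitions
    by (rule card_UN_disjoint) (simp_all add: finite_lah_partitions, auto simp: permutations_of_set_def)
  also have "\<dots> = (\<Sum>B\<in>lah_partitions m n. fact n)"
  proof (rule sum.cong)
    fix B assume "B \<in> lah_partitions m n"
    then obtain bs where "bs \<in> block_seqs m n" "B = set bs" by (auto simp: lah_partitions_def)
    then have "card B = n" "finite B"
      by (auto simp: block_seqs_def permutations_of_set_def distinct_blocks distinct_card)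
    then show "card (permutations_of_set B) = fact n" by simp
  qed simp
  finally show ?thesis by simp
qed

lemma card_lah_partitions:
  assumes "1 \<le> n" "n \<le> m"
  shows "real (card (lah_partitions m n)) = real (m choose n) * (fact (m - 1) / fact (n - 1))"
proof -
  obtain n' m' where n: "n = Suc n'" and m: "m = Suc m'" using assms by (cases n; cases m) auto
  have "fact n * card (lah_partitions m n) = fact m * (m' choose n')"
    using card_block_seqs[of n m] card_block_seqs_lah_partitions[of m n] n m by simp
  also have "\<dots> = fact m' * (n * (m choose n))"
    using binomial_absorption[of n' m] n m by (simp add: algebra_simps)
  finally have "n * (card (lah_partitions m n) * fact n') = n * ((m choose n) * fact m')"
    using n by (simp only: fact_Suc) (simp add: algebra_simps)
  then have "card (lah_partitions m n) * fact n' = (m choose n) * fact m'"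
    using n by (simp only: mult_cancel1) simp
  then have "real (card (lah_partitions m n)) * fact n' = real (m choose n) * fact m'"
    by (metis of_nat_fact of_nat_mult)
  then show ?thesis using n m by (simp add: field_simps)
qed

interpretation nc: vector_space "nc_scale :: 'a::field \<Rightarrow> 'a ncpoly \<Rightarrow> 'a ncpoly"
  by standard (auto simp: nc_scale_def fun_eq_iff algebra_simps)

text \<open>The symmetrised product of the blocks of \<open>B\<close>: the sum of the monomials \<open>concat bs\<close>
  over the orderings \<open>bs\<close> of \<open>B\<close>, which are pairwise distinct when the blocks are disjoint.\<close>

definition lah_poly :: "nat list set \<Rightarrow> 'a::field ncpoly" where
  "lah_poly B w = (if w \<in> concat ` permutations_of_set B then 1 else 0)"

definition multilinear_part :: "nat \<Rightarrow> 'a::field ncp \<Rightarrow> 'a ncpoly" where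
  "multilinear_part m P w = (if w \<in> permutations_of_set {0..<m} then coeff P w else 0)"

lemma multilinear_part_eq_coeff: "coeff P \<in> V m \<Longrightarrow> multilinear_part m P = coeff P"
  by (auto simp: multilinear_part_def V_def permutations_of_set_def fun_eq_iff)

lemma module_hom_multilinear_part: "module_hom ncp_scale nc_scale (multilinear_part m)"
  by (simp add: module_hom_iff ncp.module_axioms nc.module_axioms)
     (simp add: multilinear_part_def nc_scale_def fun_eq_iff lookup_add)

lemma sum_fun_apply: "(\<Sum>x\<in>A. f x) y = (\<Sum>x\<in>A. f x y)"
  by (induction A rule: infinite_finite_induct) simp_all

lemma multilinear_part_power:
  fixes H :: "'a::field ncp"
  assumes H: "H \<in> augmentation_ideal"
  shows "multilinear_part m (H ^ n)
    = (\<Sum>B\<in>lah_partitions m n. nc_scale (\<Prod>u\<in>B. coeff H u) (lah_poly B))"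
proof
  fix w
  let ?c = "\<lambda>B. \<Prod>u\<in>B. coeff H u"
  let ?L = "{B \<in> lah_partitions m n. w \<in> concat ` permutations_of_set B}"
  have rhs: "(\<Sum>B\<in>lah_partitions m n. nc_scale (?c B) (lah_poly B)) w = (\<Sum>B\<in>?L. ?c B)"
    by (simp add: sum_fun_apply nc_scale_def lah_poly_def sum.inter_filter finite_lah_partitions)
       (rule sum.cong; simp)
  show "multilinear_part m (H ^ n) w = (\<Sum>B\<in>lah_partitions m n. nc_scale (?c B) (lah_poly B)) w"
  proof (cases "w \<in> permutations_of_set {0..<m}")
    case False
    have "w \<noteq> concat bs" if "B \<in> lah_partitions m n" "bs \<in> permutations_of_set B" for B bs
      using permutation_of_lah_partition_in_block_seqs[OF that] False by (auto simp: block_seqs_def)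
    then have "?L = {}" by blast
    then show ?thesis using False by (simp only: rhs multilinear_part_def sum.empty if_False)
  next
    case True
    then have "distinct w" by (simp add: permutations_of_set_def)
    have "(\<Sum>B\<in>?L. ?c B) = (\<Sum>bs\<in>compositions n w. ?c (set bs))"
      unfolding lah_partitions_containing_word[OF True]
      by (rule sum.reindex[OF inj_on_set_compositions[OF \<open>distinct w\<close>], unfolded comp_def])
    also have "\<dots> = coeff (H ^ n) w"
      using distinct_compositions[OF \<open>distinct w\<close>]
      by (simp add: coeff_power_compositions[OF H] prod.distinct_set_conv_list)
    finally show ?thesis using True by (simp add: rhs multilinear_part_def)
  qed
qed

lemma multilinear_part_powers_span:
  assumes "P \<in> powers_span n"
  shows "multilinear_part m P \<in> nc.span (lah_poly ` lah_partitions m n)"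
proof (rule powers_span_hom_image[OF module_hom_multilinear_part nc.subspace_span _ assms])
  fix H :: "'a ncp" assume "H \<in> augmentation_ideal"
  then show "multilinear_part m (H ^ n) \<in> nc.span (lah_poly ` lah_partitions m n)"
    by (simp add: multilinear_part_power nc.span_sum nc.span_scale nc.span_base)
qed

lemma W_subset_span_lah_poly:
  assumes "n \<noteq> 0"
  shows "W n m \<subseteq> nc.span (lah_poly ` lah_partitions m n :: 'a::field_char_0 ncpoly set)"
proof
  fix p :: "'a ncpoly" assume "p \<in> W n m"
  then obtain P where "p = coeff P" "P \<in> powers_span n" "coeff P \<in> V m"
    using T_ideal_x_pow_subset_powers_span[OF assms] by (auto simp: W_def)
  then show "p \<in> nc.span (lah_poly ` lah_partitions m n)"
    by (metis multilinear_part_eq_coeff multilinear_part_powers_span)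
qed

theorem lemma5p1:
  fixes n m :: nat
  assumes "1 \<le> n" and "n \<le> m"
  shows "real (ncdim (W n m :: ('a::field_char_0) ncpoly set))
           \<le> real (m choose n) * (fact (m - 1) / fact (n - 1))"
proof -
  have "ncdim (W n m :: 'a ncpoly set) \<le> card (lah_poly ` lah_partitions m n :: 'a ncpoly set)"
    unfolding ncdim_def using assms(1)
    by (intro nc.dim_le_card W_subset_span_lah_poly) (simp_all add: finite_lah_partitions)
  also have "\<dots> \<le> card (lah_partitions m n)"
    by (rule card_image_le[OF finite_lah_partitions])
  finally show ?thesis
    using card_lah_partitions[OF assms] by (metis of_nat_le_iff)
qed

end
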